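(* Let $\mathcal{H}$ be a separable infinite-dimensional complex Hilbert space, let $T\in\mathscr{B}(\mathcal{H})$ have dense range, let $\varepsilon>0$ and let $x_0\in\mathcal{H}$ with $\|x_0\|>\varepsilon$. Then the map $t\mapsto\|y_{tx_0,\varepsilon}\|$ is non-decreasing on the interval $\left]\frac{\varepsilon}{\|x_0\|},+\infty\right[$.
   Context: For $T\in\mathscr{B}(\mathcal{H})$ with dense range, $x\neq 0$ and $0<\varepsilon<\|x\|$, the extremal vector $y_{x,\varepsilon}$ is the unique vector $y_0\in\mathcal{H}$ with $\|Ty_0-x\|\leqslant\varepsilon$ and $\|y_0\|=\inf\{\|y\|:\|Ty-x\|\leqslant\varepsilon\}$. *)

theory Defs
  imports "HOL-Analysis.Analysis"
begin

text \<open>A complex Hilbert space is modelled as a real Hilbert space (real inner product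
  space that is complete) together with a complex scalar multiplication sc that extends
  the real one, satisfies the module axioms, and for which multiplication by i is
  isometric for the real inner product. The complex inner product is then
  inner x y + i * inner x (sc i y); the norm is the same.\<close>

definition complex_scaling :: "(complex \<Rightarrow> 'a::real_inner \<Rightarrow> 'a) \<Rightarrow> bool" where
  "complex_scaling sc \<longleftrightarrow>
     (\<forall>r x. sc (complex_of_real r) x = r *\<^sub>R x) \<and>
     (\<forall>a b x. sc (a + b) x = sc a x + sc b x) \<and>
     (\<forall>a x y. sc a (x + y) = sc a x + sc a y) \<and>
     (\<forall>a b x. sc (a * b) x = sc a (sc b x)) \<and>
     (\<forall>x y. inner (sc \<i> x) (sc \<i> y) = inner x y)"

definition bounded_clinear_op ::
  "(complex \<Rightarrow> 'a::real_normed_vector \<Rightarrow> 'a) \<Rightarrow> ('a \<Rightarrow> 'a) \<Rightarrow> bool" where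
  "bounded_clinear_op sc T \<longleftrightarrow> bounded_linear T \<and> (\<forall>c x. T (sc c x) = sc c (T x))"

text \<open>Infinite-dimensional: not spanned by any finite set (real and complex
  finite-dimensionality coincide).\<close>
definition infinite_dimensional :: "'a::real_vector itself \<Rightarrow> bool" where
  "infinite_dimensional _ \<longleftrightarrow> \<not> (\<exists>S::'a set. finite S \<and> span S = UNIV)"

definition extremal_vector :: "('a::real_normed_vector \<Rightarrow> 'a) \<Rightarrow> 'a \<Rightarrow> real \<Rightarrow> 'a" where
  "extremal_vector T x \<epsilon> =
     (THE y0. norm (T y0 - x) \<le> \<epsilon> \<and>
              norm y0 = Inf {norm y | y. norm (T y - x) \<le> \<epsilon>})"

end

theory Submission
  imports Defs
begin

text \<open>For \<open>0 < s \<le> t\<close>, shrinking by \<open>s / t\<close> maps every \<open>y\<close> with \<open>\<parallel>T y - t x\<^sub>0\<parallel> \<le> \<epsilon>\<close> to a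
  vector \<open>(s / t) y\<close> with \<open>\<parallel>T ((s / t) y) - s x\<^sub>0\<parallel> = (s / t) \<parallel>T y - t x\<^sub>0\<parallel> \<le> \<epsilon>\<close> and smaller
  norm, so the infimal norm for \<open>s x\<^sub>0\<close> is at most the one for \<open>t x\<^sub>0\<close>. The extremal vector
  exists, being the minimum-norm point of a nonempty closed convex set in a Hilbert space
  (the parallelogram law makes minimising sequences Cauchy), so its norm is this infimum.\<close>

definition admissible :: "('a::real_normed_vector \<Rightarrow> 'a) \<Rightarrow> 'a \<Rightarrow> real \<Rightarrow> 'a set" where
  "admissible T x \<epsilon> = {y. norm (T y - x) \<le> \<epsilon>}"

lemma parallelogram_law:
  fixes a b :: "'a::real_inner"
  shows "norm (a + b)^2 + norm (a - b)^2 = 2 * norm a ^2 + 2 * norm b ^2"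
  by (simp add: power2_norm_eq_inner inner_add_left inner_add_right inner_diff_left
      inner_diff_right inner_commute)

lemma convex_norm_diff_sq_le:
  fixes a b :: "'a::real_inner"
  assumes "convex S" "a \<in> S" "b \<in> S" "\<And>z. z \<in> S \<Longrightarrow> d \<le> norm z" "0 \<le> d"
  shows "norm (a - b)^2 \<le> 2 * (norm a ^2 - d^2) + 2 * (norm b ^2 - d^2)"
proof -
  have "(1/2) *\<^sub>R a + (1/2) *\<^sub>R b \<in> S"
    by (rule convexD[OF assms(1-3)]) auto
  then have "d \<le> norm ((1/2) *\<^sub>R (a + b))"
    using assms(4) by (simp add: scaleR_add_right)
  then have "2 * d \<le> norm (a + b)" by simp
  then have "(2 * d)^2 \<le> norm (a + b)^2" using assms(5) by (intro power_mono) auto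
  with parallelogram_law[of a b] show ?thesis by (simp add: power_mult_distrib)
qed

lemma convex_minimising_sequence_Cauchy:
  fixes y :: "nat \<Rightarrow> 'a::real_inner"
  assumes "convex S" "\<And>n. y n \<in> S" "\<And>z. z \<in> S \<Longrightarrow> d \<le> norm z" "0 \<le> d"
    and "(\<lambda>n. norm (y n)) \<longlonglongrightarrow> d"
  shows "Cauchy y"
proof (rule metric_CauchyI)
  define f where "f n = norm (y n)^2 - d^2" for n
  have "f \<longlonglongrightarrow> 0"
    unfolding f_def using tendsto_diff[OF tendsto_power[OF assms(5), of 2] tendsto_const[of "d^2"]] by simp
  have diff_bound: "norm (y m - y n)^2 \<le> 2 * f m + 2 * f n" for m n
    unfolding f_def by (rule convex_norm_diff_sq_le[OF assms(1,2,2,3,4)])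
  fix e :: real
  assume "e > 0"
  then obtain N where N: "\<And>n. n \<ge> N \<Longrightarrow> \<bar>f n\<bar> < e^2/4"
    using \<open>f \<longlonglongrightarrow> 0\<close>[THEN LIMSEQ_D, of "e^2/4"] by auto
  have "dist (y m) (y n) < e" if "m \<ge> N" "n \<ge> N" for m n
  proof -
    have "norm (y m - y n)^2 < e^2"
      using diff_bound[of m n] N[OF \<open>m \<ge> N\<close>] N[OF \<open>n \<ge> N\<close>] by linarith
    then show ?thesis using \<open>e > 0\<close> by (simp add: dist_norm power_less_imp_less_base)
  qed
  then show "\<exists>M. \<forall>m\<ge>M. \<forall>n\<ge>M. dist (y m) (y n) < e" by blast
qed

lemma closed_convex_min_norm_attained:
  fixes S :: "'a::{real_inner, complete_space} set"
  assumes "closed S" "convex S" "S \<noteq> {}"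
  shows "\<exists>y\<in>S. norm y = Inf (norm ` S)"
proof -
  define d where "d = Inf (norm ` S)"
  have bdd: "bdd_below (norm ` S)" by (rule bdd_belowI[of _ 0]) auto
  have d_le: "d \<le> norm z" if "z \<in> S" for z
    unfolding d_def using bdd that by (simp add: cInf_lower)
  have "0 \<le> d" unfolding d_def using assms(3) by (intro cInf_greatest) auto
  have "d \<in> closure (norm ` S)"
    unfolding d_def using assms(3) bdd by (intro closure_contains_Inf) auto
  then obtain r where "\<forall>n. \<exists>z\<in>S. r n = norm z" and "r \<longlonglongrightarrow> d"
    by (auto simp: closure_sequential image_iff)
  moreover obtain y where y_in: "\<And>n. y n \<in> S" and "r = (\<lambda>n. norm (y n))"
    using calculation(1) by metis
  ultimately have norm_lim: "(\<lambda>n. norm (y n)) \<longlonglongrightarrow> d" by simp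
  then have "Cauchy y"
    using convex_minimising_sequence_Cauchy[of S y d] assms(2) y_in d_le \<open>0 \<le> d\<close> by blast
  then obtain l where "y \<longlonglongrightarrow> l" using Cauchy_convergent_iff convergent_def by blast
  then have "l \<in> S" using assms(1) y_in closed_sequentially by blast
  moreover have "norm l = d"
    using tendsto_unique[OF _ tendsto_norm[OF \<open>y \<longlonglongrightarrow> l\<close>] norm_lim] by simp
  ultimately show ?thesis unfolding d_def by blast
qed

lemma convex_min_norm_unique:
  fixes S :: "'a::real_inner set"
  assumes "convex S" "a \<in> S" "b \<in> S" "norm a = Inf (norm ` S)" "norm b = Inf (norm ` S)"
  shows "a = b"
proof -
  have bdd: "bdd_below (norm ` S)" by (rule bdd_belowI[of _ 0]) auto
  have "0 \<le> Inf (norm ` S)" using assms(2) by (intro cInf_greatest) auto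
  then have "norm (a - b)^2 \<le> 0"
    using convex_norm_diff_sq_le[OF assms(1-3), of "Inf (norm ` S)"] assms(4,5) bdd
    by (simp add: cInf_lower)
  then show ?thesis by simp
qed

lemma admissible_eq_vimage_cball: "admissible T x \<epsilon> = T -` cball x \<epsilon>"
  by (auto simp: admissible_def dist_norm norm_minus_commute)

lemma admissible_nonempty:
  assumes "closure (range T) = UNIV" "\<epsilon> > 0"
  shows "admissible T x \<epsilon> \<noteq> {}"
proof -
  have "x \<in> closure (range T)" using assms(1) by simp
  then obtain y where "dist (T y) x < \<epsilon>" using assms(2) closure_approachable by blast
  then have "y \<in> admissible T x \<epsilon>" by (simp add: admissible_def dist_norm)
  then show ?thesis by blast
qed

lemma norm_extremal_vector:
  fixes T :: "'a::{real_inner, complete_space} \<Rightarrow> 'a"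
  assumes "bounded_linear T" "closure (range T) = UNIV" "\<epsilon> > 0"
  shows "norm (extremal_vector T x \<epsilon>) = Inf (norm ` admissible T x \<epsilon>)"
proof -
  let ?S = "admissible T x \<epsilon>"
  have "closed ?S"
    unfolding admissible_eq_vimage_cball
    using assms(1) by (intro continuous_closed_vimage linear_continuous_at) auto
  moreover have "convex ?S"
    unfolding admissible_eq_vimage_cball
    using assms(1) by (intro convex_linear_vimage) (auto dest: bounded_linear.linear)
  ultimately have "\<exists>!y. y \<in> ?S \<and> norm y = Inf (norm ` ?S)"
    using closed_convex_min_norm_attained convex_min_norm_unique
      admissible_nonempty[OF assms(2,3)] by metis
  moreover have "extremal_vector T x \<epsilon> = (THE y. y \<in> ?S \<and> norm y = Inf (norm ` ?S))"
    unfolding extremal_vector_def admissible_def by (simp add: setcompr_eq_image)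
  ultimately show ?thesis by (metis (mono_tags, lifting) theI')
qed

lemma scaleR_mem_admissible:
  assumes "linear T" "y \<in> admissible T x \<epsilon>" "0 \<le> c" "c \<le> 1" "0 \<le> \<epsilon>"
  shows "c *\<^sub>R y \<in> admissible T (c *\<^sub>R x) \<epsilon>"
proof -
  have "norm (T (c *\<^sub>R y) - c *\<^sub>R x) = c * norm (T y - x)"
    using assms(1,3) by (simp add: linear_scale flip: scaleR_diff_right)
  also have "\<dots> \<le> 1 * \<epsilon>"
    using assms(2-5) by (intro mult_mono) (auto simp: admissible_def)
  finally show ?thesis by (simp add: admissible_def)
qed

lemma Inf_norm_admissible_mono:
  assumes "linear T" "0 < s" "s \<le> t" "0 \<le> \<epsilon>" "admissible T (t *\<^sub>R x) \<epsilon> \<noteq> {}"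
  shows "Inf (norm ` admissible T (s *\<^sub>R x) \<epsilon>) \<le> Inf (norm ` admissible T (t *\<^sub>R x) \<epsilon>)"
proof (rule cInf_greatest)
  show "norm ` admissible T (t *\<^sub>R x) \<epsilon> \<noteq> {}" using assms(5) by simp
next
  fix r
  assume "r \<in> norm ` admissible T (t *\<^sub>R x) \<epsilon>"
  then obtain y where y: "y \<in> admissible T (t *\<^sub>R x) \<epsilon>" and r: "r = norm y" by auto
  have "(s / t) *\<^sub>R y \<in> admissible T (s *\<^sub>R x) \<epsilon>"
    using scaleR_mem_admissible[OF assms(1) y, of "s / t"] assms(2-4) by simp
  then have "Inf (norm ` admissible T (s *\<^sub>R x) \<epsilon>) \<le> norm ((s / t) *\<^sub>R y)"
    by (rule cInf_lower[OF imageI]) (auto intro: bdd_belowI[of _ 0])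
  also have "\<dots> = (s / t) * norm y" using assms(2,3) by simp
  also have "\<dots> \<le> norm y" using assms(2,3) by (intro mult_left_le_one_le) auto
  finally show "Inf (norm ` admissible T (s *\<^sub>R x) \<epsilon>) \<le> r" using r by simp
qed

theorem mainTheorem9:
  fixes sc :: "complex \<Rightarrow> 'a::{real_inner, complete_space} \<Rightarrow> 'a"
    and T :: "'a \<Rightarrow> 'a" and \<epsilon> :: real and x0 :: 'a
  assumes "complex_scaling sc"
    and "separable_space (euclidean :: 'a topology)"
    and "infinite_dimensional TYPE('a)"
    and "bounded_clinear_op sc T"
    and "closure (range T) = UNIV"
    and "\<epsilon> > 0"
    and "norm x0 > \<epsilon>"
  shows "mono_on {\<epsilon> / norm x0 <..} (\<lambda>t. norm (extremal_vector T (t *\<^sub>R x0) \<epsilon>))"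
proof (rule mono_onI)
  have T: "bounded_linear T" using assms(4) by (simp add: bounded_clinear_op_def)
  fix s t
  assume "s \<in> {\<epsilon> / norm x0 <..}" "t \<in> {\<epsilon> / norm x0 <..}" "s \<le> t"
  moreover have "0 < \<epsilon> / norm x0" using assms(6,7) by (intro divide_pos_pos) auto
  ultimately have "0 < s" by simp
  then show "norm (extremal_vector T (s *\<^sub>R x0) \<epsilon>) \<le> norm (extremal_vector T (t *\<^sub>R x0) \<epsilon>)"
    using Inf_norm_admissible_mono[OF bounded_linear.linear[OF T] _ \<open>s \<le> t\<close>]
      admissible_nonempty[OF assms(5,6)] assms(6)
    by (simp add: norm_extremal_vector[OF T assms(5,6)])
qed

end
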